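(* Let $\alpha$ be a Heron angle with $0\le\alpha<\pi/2$, and let $\lambda\ge0$ be a rational number such that $\tan\alpha=\lambda^2$. Then $\alpha=0$.
   Context: An angle $\theta$ is called a Heron angle if both $\sin\theta$ and $\cos\theta$ are rational numbers. *)

theory Defs
  imports Complex_Main
begin

definition heron_angle :: "real \<Rightarrow> bool" where
  "heron_angle \<theta> \<longleftrightarrow> sin \<theta> \<in> \<rat> \<and> cos \<theta> \<in> \<rat>"

end

theory Submission
  imports Defs "HOL-Computational_Algebra.Nth_Powers"
begin

text \<open>Since \<open>1 + tan\<^sup>2 \<alpha> = 1 / cos\<^sup>2 \<alpha>\<close> and \<open>cos \<alpha>\<close> is rational, \<open>tan \<alpha> = \<lambda>\<^sup>2\<close> yields a rational
  point \<open>\<lambda>\<^sup>4 + 1 = w\<^sup>2\<close>. Clearing denominators gives a solution of \<open>x\<^sup>4 + y\<^sup>4 = z\<^sup>2\<close> in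
  natural numbers, which by Fermat's infinite descent forces \<open>x = 0\<close>, i.e. \<open>\<lambda> = 0\<close>.\<close>

lemma square_mod_4_nat: "(n::nat)^2 mod 4 = (if even n then 0 else 1)"
proof (cases "even n")
  case True
  then obtain k where "n = 2 * k" by blast
  then show ?thesis by (simp add: power2_eq_square)
next
  case False
  then obtain k where "n = 2 * k + 1" using oddE by blast
  then have "n^2 = 4 * (k * k + k) + 1" by (simp add: power2_eq_square algebra_simps)
  then show ?thesis using False by simp
qed

lemma sum_of_odd_squares_not_square_nat:
  fixes x y z :: nat
  assumes "odd x" "odd y"
  shows "x^2 + y^2 \<noteq> z^2"
proof
  assume eq: "x^2 + y^2 = z^2"
  have "(x^2 + y^2) mod 4 = (x^2 mod 4 + y^2 mod 4) mod 4" by (rule mod_add_eq[symmetric])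
  then have "(x^2 + y^2) mod 4 = 2" using assms square_mod_4_nat[of x] square_mod_4_nat[of y] by simp
  then show False using eq square_mod_4_nat[of z] by (auto split: if_splits)
qed

lemma coprime_mult_eq_square_nat:
  fixes a b :: nat
  assumes "coprime a b" "a * b = t^2"
  obtains u v where "a = u^2" "b = v^2" "coprime u v"
proof -
  have "is_nth_power 2 (a * b)" using assms(2) by auto
  then have "is_nth_power 2 a" "is_nth_power 2 b"
    using is_nth_power_mult_coprime_nat_iff[OF assms(1)] by auto
  then obtain u v where "a = u^2" "b = v^2" by (auto elim!: is_nth_powerE)
  moreover have "coprime u v" using assms(1) calculation by simp
  ultimately show ?thesis using that by blast
qed

lemma primitive_pythagorean_triple_nat:
  fixes a b c :: nat
  assumes eq: "a^2 + b^2 = c^2" and "coprime a b" "even b" "b > 0"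
  obtains m n where "coprime m n" "c = m^2 + n^2" "b = 2 * m * n" "a + n^2 = m^2"
proof -
  have odd_a: "odd a" using assms(2,3) by (metis coprime_common_divisor_nat dvd_refl odd_one)
  have odd_c: "odd c" using eq odd_a \<open>even b\<close> by (metis even_add even_power zero_less_numeral)
  have "b^2 > 0" using \<open>b > 0\<close> by simp
  then have "a^2 < c^2" using eq by linarith
  then have "a < c" using power_less_imp_less_base by blast
  moreover have "even (c - a)" using odd_a odd_c \<open>a < c\<close> by simp
  ultimately obtain Q where c: "c = a + 2 * Q" by (metis dvdE le_add_diff_inverse less_imp_le)
  obtain t where b: "b = 2 * t" using \<open>even b\<close> by blast
  have "4 * t^2 + a^2 = (a + 2 * Q)^2" using eq c b by (simp add: power_mult_distrib)
  then have Qt: "Q * (a + Q) = t^2" by (simp add: power2_eq_square algebra_simps)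
  have "coprime a (b^2)" using assms(2) by simp
  then have "coprime a (4 * (Q * (a + Q)))" using Qt b by (simp add: power_mult_distrib)
  then have "coprime a Q" by simp
  then have "coprime Q (a + Q)"
    by (metis coprime_iff_gcd_eq_1 gcd_add2 add.commute gcd.commute)
  then obtain n m where nm: "Q = n^2" "a + Q = m^2" "coprime n m"
    using coprime_mult_eq_square_nat[OF _ Qt] by blast
  moreover have "t = m * n" using Qt nm
    by (metis power_mult_distrib power2_eq_imp_eq zero_le mult.commute)
  ultimately show ?thesis using that[of m n] c b by (auto simp: coprime_commute)
qed

lemma coprime_mult_sum_squares_nat:
  fixes a b :: nat
  assumes "coprime a b"
  shows "coprime (a * b) (a^2 + b^2)"
proof -
  have "gcd a (a * a + b^2) = gcd a (b^2)" "gcd b (b * b + a^2) = gcd b (a^2)"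
    by (rule gcd_add_mult)+
  moreover have "coprime a (b^2)" "coprime b (a^2)" using assms by (auto simp: coprime_commute)
  ultimately have "coprime a (a^2 + b^2)" "coprime b (a^2 + b^2)"
    by (auto simp: coprime_iff_gcd_eq_1 power2_eq_square add.commute)
  then show ?thesis by simp
qed

text \<open>After making \<open>y\<close> even, two Pythagorean parametrisations give
  \<open>x\<^sup>2 = a\<^sup>2 - b\<^sup>2\<close> and \<open>y\<^sup>2 = 4ab(a\<^sup>2 + b\<^sup>2)\<close> with \<open>a, b, a\<^sup>2 + b\<^sup>2\<close> pairwise coprime squares,
  so \<open>a = u\<^sup>2\<close>, \<open>b = v\<^sup>2\<close>, \<open>a\<^sup>2 + b\<^sup>2 = w\<^sup>2\<close> is a smaller solution.\<close>

lemma fourth_powers_sum_square_descent: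
  fixes x y z :: nat
  assumes "coprime x y" "x > 0" "y > 0" "even y" and eq: "x^4 + y^4 = z^2"
  obtains u v w where "coprime u v" "u > 0" "v > 0" "u^4 + v^4 = w^2" "w < z"
proof -
  have odd_x: "odd x" using assms(1,4) by (metis coprime_common_divisor_nat dvd_refl odd_one)
  have "(x^2)^2 + (y^2)^2 = z^2" using eq by (simp add: power_mult[symmetric])
  moreover have "coprime (x^2) (y^2)" using assms(1) by simp
  moreover have "even (y^2)" "y^2 > 0" using assms(3,4) by auto
  ultimately obtain m n where mn: "coprime m n" "z = m^2 + n^2" "y^2 = 2 * m * n" "x^2 + n^2 = m^2"
    by (rule primitive_pythagorean_triple_nat)
  have "n > 0" using mn(3) \<open>y > 0\<close> by (cases "n = 0") auto
  have "even n" using sum_of_odd_squares_not_square_nat[of x n m] mn(4) odd_x by blast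
  have "coprime n (m^2)" using mn(1) by (simp add: coprime_commute)
  moreover have "m^2 = n * n + x^2" using mn(4) by (simp add: power2_eq_square)
  then have "gcd n (m^2) = gcd n (x^2)" using gcd_add_mult[of n n "x^2"] by simp
  ultimately have "coprime n (x^2)" by (simp add: coprime_iff_gcd_eq_1)
  then have "coprime x n" by (simp add: coprime_commute)
  then obtain a b where ab: "coprime a b" "m = a^2 + b^2" "n = 2 * a * b" "x + b^2 = a^2"
    using primitive_pythagorean_triple_nat[OF mn(4)] \<open>even n\<close> \<open>n > 0\<close> by blast
  obtain t where t: "y = 2 * t" using \<open>even y\<close> by blast
  have "4 * t^2 = 4 * (a * b * (a^2 + b^2))" using mn(3) ab t by (simp add: power_mult_distrib algebra_simps)
  then have "(a * b) * (a^2 + b^2) = t^2" by simp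
  then obtain r w where rw: "a * b = r^2" "a^2 + b^2 = w^2"
    using coprime_mult_eq_square_nat[OF coprime_mult_sum_squares_nat[OF ab(1)]] by blast
  then obtain u v where uv: "a = u^2" "b = v^2" "coprime u v"
    using coprime_mult_eq_square_nat[OF ab(1)] by blast
  have "u > 0" "v > 0" using ab(3) \<open>n > 0\<close> uv by auto
  moreover have "u^4 + v^4 = w^2" using rw(2) uv by (simp add: power_mult[symmetric])
  moreover have "w < z"
  proof -
    have "w > 0" using rw(2) \<open>u > 0\<close> uv by (cases "w = 0") auto
    then have "w \<le> w^2" by (simp add: power2_eq_square)
    also have "\<dots> = m" using rw ab by simp
    also have "m \<le> m^2" using mn(4) \<open>x > 0\<close> by (simp add: power2_eq_square)
    also have "m^2 < z" using mn(2) \<open>n > 0\<close> by simp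
    finally show "w < z" .
  qed
  ultimately show ?thesis using that uv(3) by blast
qed

lemma coprime_fourth_powers_sum_not_square_nat:
  fixes x y z :: nat
  assumes "coprime x y" "x > 0" "y > 0"
  shows "x^4 + y^4 \<noteq> z^2"
  using assms
proof (induction z arbitrary: x y rule: less_induct)
  case (less z)
  show ?case
  proof
    assume eq: "x^4 + y^4 = z^2"
    have "(x^2)^2 + (y^2)^2 = z^2" using eq by (simp flip: power_mult)
    then consider "even y" | "even x"
      using sum_of_odd_squares_not_square_nat[of "x^2" "y^2" z] by auto
    then obtain u v w where "coprime u v" "u > 0" "v > 0" "u^4 + v^4 = w^2" "w < z"
    proof cases
      case 1
      then show ?thesis using fourth_powers_sum_square_descent less.prems eq that by blast
    next
      case 2
      have "y^4 + x^4 = z^2" using eq by simp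
      then show ?thesis
        using fourth_powers_sum_square_descent less.prems 2 that by (metis coprime_commute)
    qed
    then show False using less.IH by blast
  qed
qed

lemma fourth_powers_sum_not_square_nat:
  fixes x y z :: nat
  assumes "x > 0" "y > 0"
  shows "x^4 + y^4 \<noteq> z^2"
proof
  assume eq: "x^4 + y^4 = z^2"
  define d where "d = gcd x y"
  have "d > 0" using assms by (simp add: d_def)
  obtain x' y' where xy: "x = x' * d" "y = y' * d" "coprime x' y'"
    using gcd_coprime_exists[of x y] \<open>d > 0\<close> unfolding d_def by auto
  have d4: "(d^2)^2 * (x'^4 + y'^4) = z^2" using eq unfolding xy(1,2)
    by (simp add: power_mult_distrib algebra_simps flip: power_mult)
  then have "d^2 dvd z" by (metis dvd_triv_left pow_divides_pow_iff zero_less_numeral)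
  then obtain z' where "z = d^2 * z'" by blast
  with d4 have "x'^4 + y'^4 = z'^2" using \<open>d > 0\<close> by (simp add: power_mult_distrib)
  moreover have "x' > 0" "y' > 0" using xy assms by auto
  ultimately show False using coprime_fourth_powers_sum_not_square_nat xy(3) by blast
qed

lemma Rats_fourth_power_plus_one_eq_square_imp_zero:
  fixes l w :: real
  assumes "l \<in> \<rat>" "w \<in> \<rat>" and eq: "l^4 + 1 = w^2"
  shows "l = 0"
proof (rule ccontr)
  assume "l \<noteq> 0"
  obtain p q :: nat where "q \<noteq> 0" and p: "\<bar>l\<bar> = real p / real q"
    using Rats_abs_nat_div_natE[OF assms(1)] by metis
  obtain a b :: nat where "b \<noteq> 0" and a: "\<bar>w\<bar> = real a / real b"
    using Rats_abs_nat_div_natE[OF assms(2)] by metis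
  have "\<bar>l\<bar>^4 + 1 = \<bar>w\<bar>^2" using eq by simp
  then have "(real p / real q)^4 + 1 = (real a / real b)^2" by (simp only: p a)
  then have "real b^2 * (real p^4 + real q^4) = real a^2 * real q^4"
    using \<open>q \<noteq> 0\<close> \<open>b \<noteq> 0\<close> by (simp add: field_simps power_divide)
  then have "b^2 * (p^4 + q^4) = a^2 * q^4"
    by (metis (mono_tags) of_nat_add of_nat_eq_iff of_nat_mult of_nat_power)
  then have "b^2 * (b^2 * (p^4 + q^4)) = b^2 * (a^2 * q^4)" by simp
  then have "(p * b)^4 + (q * b)^4 = (a * b * q^2)^2"
    by (simp add: power_mult_distrib algebra_simps power2_eq_square power4_eq_xxxx)
  moreover have "p \<noteq> 0" using p \<open>l \<noteq> 0\<close> by (cases "p = 0") auto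
  then have "p * b > 0" "q * b > 0" using \<open>q \<noteq> 0\<close> \<open>b \<noteq> 0\<close> by auto
  ultimately show False using fourth_powers_sum_not_square_nat by blast
qed

theorem lemma2:
  fixes \<alpha> l :: real
  assumes "heron_angle \<alpha>"
    and "0 \<le> \<alpha>" and "\<alpha> < pi / 2"
    and "l \<in> \<rat>" and "l \<ge> 0"
    and "tan \<alpha> = l^2"
  shows "\<alpha> = 0"
proof -
  have "cos \<alpha> \<noteq> 0" using assms(2,3) by (intro cos_gt_zero_pi[THEN less_imp_neq, symmetric]) auto
  then have "l^4 + 1 = (inverse (cos \<alpha>))^2"
    using tan_sec[of \<alpha>] assms(6) by (simp add: power_mult[symmetric])
  moreover have "inverse (cos \<alpha>) \<in> \<rat>" using assms(1) by (simp add: heron_angle_def)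
  ultimately have "l = 0" using Rats_fourth_power_plus_one_eq_square_imp_zero assms(4) by blast
  then have "tan \<alpha> = 0" using assms(6) by simp
  then show ?thesis using tan_gt_zero[of \<alpha>] assms(2,3) by fastforce
qed

end
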